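(* Assume the context distribution is stationary, i.e. $p(x,t)=p(x)p(t)$ on $\mathcal{X}\times[0,T]$ and the context distribution at the target time satisfies $p(x\mid t')=p(x)$. Suppose the logging policy $\pi_0$ satisfies common support for $\pi_e$ and $t'$, i.e. $\pi_e(a\mid x,t')>0 \implies \pi_0(a\mid x,t)>0$ for all $x\in\mathcal{X}$, $t\in[0,T]$, $a\in\mathcal{A}$, and that the time feature function $\phi$ satisfies $p(\phi(t'))>0$. Then the OPFV estimator has bias $$\mathrm{Bias}\big(\hat V^{\mathrm{OPFV}}_{t'}(\pi_e;\mathcal{D})\big)=\mathbb{E}_{p(x,t)\pi_e(a\mid x,t')}\left[\frac{\mathbb{I}_\phi(t,t')}{p(\phi(t'))}\Big(\Delta_q(x,t,t',a)-\Delta_{\hat f}(x,t,t',a)\Big)\right].$$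
   Context: Contexts $x\in\mathcal{X}$, a finite action set $\mathcal{A}$, continuous time $t$, and rewards $r\in[0,r_{\max}]$. The logged data $\mathcal{D}=\{(x_i,t_i,a_i,r_i)\}_{i=1}^n$ consists of $n$ i.i.d. draws with $(x,t)\sim p(x,t)$ supported on $\mathcal{X}\times[0,T]$ ($T>0$ the end of the logging window), $a\sim\pi_0(a\mid x,t)$ (logging policy), $r\sim p(r\mid x,t,a)$; the reward distributions $p(r\mid x,t,a)$ are defined for all times $t\ge 0$, including future times. Let $q(x,t,a)=\mathbb{E}[r\mid x,t,a]$. A target time $t'>T$ and an evaluation policy $\pi_e(a\mid x,t)$ are fixed; the future policy value is $V_{t'}(\pi_e)=\mathbb{E}_{p(x\mid t')\pi_e(a\mid x,t')}[q(x,t',a)]$. A time feature function is any map $\phi$ from times to a set of labels; $\mathbb{I}_\phi(t,t')=\mathbb{I}\{\phi(t)=\phi(t')\}$ and $p(\phi(t'))=\int_0^T p(s)\,\mathbb{I}_\phi(s,t')\,ds$, where $p(t)$ is the marginal density of $t$. $\hat f:\mathcal{X}\times[0,\infty)\times\mathcal{A}\to\mathbb{R}$ is a fixed (non-random) reward regressor. The OPFV estimator is $$\hat V^{\mathrm{OPFV}}_{t'}(\pi_e;\mathcal{D})=\frac1n\sum_{i=1}^n\left\{\frac{\mathbb{I}_\phi(t_i,t')}{p(\phi(t'))}\frac{\pi_e(a_i\mid x_i,t')}{\pi_0(a_i\mid x_i,t_i)}\big(r_i-\hat f(x_i,t_i,a_i)\big)+\mathbb{E}_{\pi_e(a\mid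 x_i,t')}[\hat f(x_i,t',a)]\right\}.$$ $\mathrm{Bias}(\hat V)=\mathbb{E}_{\mathcal{D}}[\hat V]-V_{t'}(\pi_e)$. $\Delta_q(x,t,t',a)=q(x,t,a)-q(x,t',a)$ and $\Delta_{\hat f}(x,t,t',a)=\hat f(x,t,a)-\hat f(x,t',a)$. *)

theory Defs
  imports "HOL-Probability.Probability"
begin

definition ind_phi :: "(real \<Rightarrow> 'l) \<Rightarrow> real \<Rightarrow> real \<Rightarrow> real" where
  "ind_phi phi t t' = (if phi t = phi t' then 1 else 0)"

definition p_phi :: "(real \<Rightarrow> 'l) \<Rightarrow> (real \<Rightarrow> real) \<Rightarrow> real \<Rightarrow> real \<Rightarrow> real" where
  "p_phi phi pt T t' = integral\<^sup>L lborel (\<lambda>s. indicator {0..T} s * pt s * ind_phi phi s t')"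

definition qfun :: "('x \<Rightarrow> real \<Rightarrow> 'a \<Rightarrow> real measure) \<Rightarrow> 'x \<Rightarrow> real \<Rightarrow> 'a \<Rightarrow> real" where
  "qfun R x t a = integral\<^sup>L (R x t a) (\<lambda>r. r)"

definition act_dist :: "('a::finite \<Rightarrow> real) \<Rightarrow> 'a measure" where
  "act_dist p = density (count_space UNIV) (\<lambda>a. ennreal (p a))"

text \<open>Distribution of one logged record (x,t,a,r):
  (x,t) ~ Pxt, a ~ pi0(.|x,t), r ~ R(x,t,a).  Px supplies the sigma algebra on contexts.\<close>
definition sample_dist ::
  "'x measure \<Rightarrow> ('x \<times> real) measure \<Rightarrow> ('x \<Rightarrow> real \<Rightarrow> 'a::finite \<Rightarrow> real)
     \<Rightarrow> ('x \<Rightarrow> real \<Rightarrow> 'a \<Rightarrow> real measure) \<Rightarrow> ('x \<times> real \<times> 'a \<times> real) measure" where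
  "sample_dist Px Pxt pi0 R =
     Pxt \<bind> (\<lambda>(x, t). act_dist (pi0 x t) \<bind>
       (\<lambda>a. distr (R x t a) (Px \<Otimes>\<^sub>M borel \<Otimes>\<^sub>M count_space UNIV \<Otimes>\<^sub>M borel)
               (\<lambda>r. (x, t, a, r))))"

definition data_dist ::
  "nat \<Rightarrow> 'x measure \<Rightarrow> ('x \<times> real) measure \<Rightarrow> ('x \<Rightarrow> real \<Rightarrow> 'a::finite \<Rightarrow> real)
     \<Rightarrow> ('x \<Rightarrow> real \<Rightarrow> 'a \<Rightarrow> real measure) \<Rightarrow> (nat \<Rightarrow> 'x \<times> real \<times> 'a \<times> real) measure" where
  "data_dist n Px Pxt pi0 R = PiM {..<n} (\<lambda>_. sample_dist Px Pxt pi0 R)"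

definition opfv ::
  "(real \<Rightarrow> 'l) \<Rightarrow> (real \<Rightarrow> real) \<Rightarrow> real \<Rightarrow> real
     \<Rightarrow> ('x \<Rightarrow> real \<Rightarrow> 'a::finite \<Rightarrow> real) \<Rightarrow> ('x \<Rightarrow> real \<Rightarrow> 'a \<Rightarrow> real)
     \<Rightarrow> ('x \<Rightarrow> real \<Rightarrow> 'a \<Rightarrow> real) \<Rightarrow> nat \<Rightarrow> (nat \<Rightarrow> 'x \<times> real \<times> 'a \<times> real) \<Rightarrow> real" where
  "opfv phi pt T t' pie pi0 fhat n D =
     (1 / real n) * (\<Sum>i<n. (case D i of (x, t, a, r) \<Rightarrow>
        ind_phi phi t t' / p_phi phi pt T t' * (pie x t' a / pi0 x t a) * (r - fhat x t a)
        + (\<Sum>b\<in>UNIV. pie x t' b * fhat x t' b)))"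

definition policy_value ::
  "'x measure \<Rightarrow> ('x \<Rightarrow> real \<Rightarrow> 'a::finite \<Rightarrow> real) \<Rightarrow> ('x \<Rightarrow> real \<Rightarrow> 'a \<Rightarrow> real measure)
     \<Rightarrow> real \<Rightarrow> real" where
  "policy_value Px_t' pie R t' = integral\<^sup>L Px_t' (\<lambda>x. \<Sum>a\<in>UNIV. pie x t' a * qfun R x t' a)"

end

theory Submission
  imports Defs
begin

text \<open>Fix a logged context and time (x, t) with t in the logging window. Averaging one summand
  of the estimator over a ~ pi0 and r ~ R replaces r by q(x,t,a), and by common support the
  importance weight pi_e/pi_0 turns the average over pi_0 into one over pi_e(. | x, t'). So the
  conditional mean of a summand is I_phi(t,t')/p(phi(t')) times the pi_e-averaged residual
  q - fhat at time t, plus the direct-method term E_pi_e[fhat(x,t',a)]. The data are i.i.d., so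
  the estimator has this mean as well. Under stationarity the t-integral of
  I_phi(t,t')/p(phi(t')) is 1, which lets the policy value (the pi_e-averaged residual at t'
  plus the same direct-method term) be written as an integral over (x, t) of the same shape;
  subtracting gives the bias formula.\<close>

section \<open>Integrals over a composed kernel\<close>

lemma AE_integrable_kernel:
  fixes f :: "_ \<Rightarrow> real"
  assumes f[measurable]: "f \<in> borel_measurable B"
    and N[measurable]: "N \<in> measurable M (subprob_algebra B)"
    and int: "integrable (M \<bind> N) f"
  shows "AE x in M. integrable (N x) f"
proof -
  have "(\<integral>\<^sup>+x. \<integral>\<^sup>+y. norm (f y) \<partial>N x \<partial>M) = (\<integral>\<^sup>+y. norm (f y) \<partial>(M \<bind> N))"
    by (rule nn_integral_bind[symmetric, OF _ N]) measurable
  also have "\<dots> < \<infinity>"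
    using int by (simp add: integrable_iff_bounded)
  finally have "AE x in M. (\<integral>\<^sup>+y. norm (f y) \<partial>N x) \<noteq> \<infinity>"
    by (intro nn_integral_PInf_AE measurable_compose[OF N nn_integral_measurable_subprob_algebra]) auto
  with AE_space show ?thesis
  proof eventually_elim
    case (elim x)
    then have "f \<in> borel_measurable (N x)"
      by (simp only: measurable_cong_sets[OF sets_kernel[OF N] refl] f)
    with elim show ?case
      by (intro integrableI_bounded) (auto simp: less_top)
  qed
qed

lemma
  fixes f :: "_ \<Rightarrow> real"
  assumes f[measurable]: "f \<in> borel_measurable B" and f_nonneg: "\<And>y. 0 \<le> f y"
    and N[measurable]: "N \<in> measurable M (subprob_algebra B)"
    and int: "integrable (M \<bind> N) f"
  shows integrable_kernel_integral_nonneg: "integrable M (\<lambda>x. integral\<^sup>L (N x) f)"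
    and integral_bind_nonneg: "integral\<^sup>L (M \<bind> N) f = (\<integral>x. integral\<^sup>L (N x) f \<partial>M)"
proof -
  have meas: "(\<lambda>x. integral\<^sup>L (N x) f) \<in> borel_measurable M"
    by (rule measurable_compose[OF N integral_measurable_subprob_algebra]) measurable
  have "AE x in M. ennreal (integral\<^sup>L (N x) f) = (\<integral>\<^sup>+y. f y \<partial>N x)"
    using AE_integrable_kernel[OF f N int]
    by eventually_elim (simp add: nn_integral_eq_integral f_nonneg)
  then have "(\<integral>\<^sup>+x. ennreal (integral\<^sup>L (N x) f) \<partial>M) = (\<integral>\<^sup>+x. \<integral>\<^sup>+y. f y \<partial>N x \<partial>M)"
    by (rule nn_integral_cong_AE)
  also have "\<dots> = (\<integral>\<^sup>+y. f y \<partial>(M \<bind> N))"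
    by (rule nn_integral_bind[symmetric, OF _ N]) measurable
  also have "\<dots> = ennreal (integral\<^sup>L (M \<bind> N) f)"
    using int by (simp add: nn_integral_eq_integral f_nonneg)
  finally have nn: "(\<integral>\<^sup>+x. ennreal (integral\<^sup>L (N x) f) \<partial>M) = ennreal (integral\<^sup>L (M \<bind> N) f)" .
  show "integrable M (\<lambda>x. integral\<^sup>L (N x) f)"
    using meas nn by (intro integrableI_nonneg) (auto simp: f_nonneg)
  show "integral\<^sup>L (M \<bind> N) f = (\<integral>x. integral\<^sup>L (N x) f \<partial>M)"
    using meas nn by (subst integral_eq_nn_integral) (auto simp: f_nonneg)
qed

text \<open>The library's \<open>integral_bind\<close> needs a bounded integrand; importance weights are not
  bounded.\<close>

lemma integral_bind_integrable:
  fixes f :: "_ \<Rightarrow> real"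
  assumes f[measurable]: "f \<in> borel_measurable B"
    and N[measurable]: "N \<in> measurable M (subprob_algebra B)"
    and int: "integrable (M \<bind> N) f"
  shows "integral\<^sup>L (M \<bind> N) f = (\<integral>x. integral\<^sup>L (N x) f \<partial>M)"
proof -
  define fp fn where "fp y = max 0 (f y)" and "fn y = max 0 (- f y)" for y
  have fp_meas[measurable]: "fp \<in> borel_measurable B" and fn_meas[measurable]: "fn \<in> borel_measurable B"
    unfolding fp_def fn_def by measurable
  have f_eq: "f = (\<lambda>y. fp y - fn y)"
    unfolding fp_def fn_def by (auto simp: fun_eq_iff)
  have int_fp: "integrable K fp" and int_fn: "integrable K fn" if "integrable K f" for K
    using that unfolding fp_def fn_def by (auto intro: integrable_max)
  have nonneg: "0 \<le> fp y" "0 \<le> fn y" for y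
    unfolding fp_def fn_def by simp_all
  note pos = integrable_kernel_integral_nonneg[OF fp_meas nonneg(1) N int_fp[OF int]]
    integral_bind_nonneg[OF fp_meas nonneg(1) N int_fp[OF int]]
  note neg = integrable_kernel_integral_nonneg[OF fn_meas nonneg(2) N int_fn[OF int]]
    integral_bind_nonneg[OF fn_meas nonneg(2) N int_fn[OF int]]
  have kernel_integral_meas: "(\<lambda>x. integral\<^sup>L (N x) g) \<in> borel_measurable M"
    if "g \<in> borel_measurable B" for g :: "_ \<Rightarrow> real"
    by (rule measurable_compose[OF N integral_measurable_subprob_algebra[OF that]])
  have "AE x in M. integral\<^sup>L (N x) f = integral\<^sup>L (N x) fp - integral\<^sup>L (N x) fn"
    using AE_integrable_kernel[OF f N int]
  proof eventually_elim
    case (elim x)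
    show ?case
      by (subst f_eq) (rule Bochner_Integration.integral_diff[OF int_fp[OF elim] int_fn[OF elim]])
  qed
  then have "(\<integral>x. integral\<^sup>L (N x) f \<partial>M) = (\<integral>x. integral\<^sup>L (N x) fp - integral\<^sup>L (N x) fn \<partial>M)"
    by (intro integral_cong_AE kernel_integral_meas borel_measurable_diff) measurable
  also have "\<dots> = integral\<^sup>L (M \<bind> N) fp - integral\<^sup>L (M \<bind> N) fn"
    unfolding pos(2) neg(2) by (rule Bochner_Integration.integral_diff[OF pos(1) neg(1)])
  also have "\<dots> = integral\<^sup>L (M \<bind> N) f"
    by (subst f_eq) (rule Bochner_Integration.integral_diff[OF int_fp[OF int] int_fn[OF int], symmetric])
  finally show ?thesis ..
qed

lemma integrable_bind_uniform:
  fixes f :: "_ \<Rightarrow> real"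
  assumes M: "finite_measure M" and N[measurable]: "N \<in> measurable M (subprob_algebra B)"
    and f[measurable]: "f \<in> borel_measurable B"
    and f_int: "\<And>x. x \<in> space M \<Longrightarrow> integrable (N x) f"
    and f_bound: "\<And>x. x \<in> space M \<Longrightarrow> (\<integral>y. \<bar>f y\<bar> \<partial>N x) \<le> C"
  shows "integrable (M \<bind> N) f"
proof (rule integrableI_bounded)
  show "f \<in> borel_measurable (M \<bind> N)"
  proof (cases "space M = {}")
    case False
    then show ?thesis
      by (simp only: measurable_cong_sets[OF sets_bind_measurable[OF N False] refl] f)
  qed (simp add: bind_empty)
  have "(\<integral>\<^sup>+y. norm (f y) \<partial>(M \<bind> N)) = (\<integral>\<^sup>+x. \<integral>\<^sup>+y. norm (f y) \<partial>N x \<partial>M)"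
    by (rule nn_integral_bind[OF _ N]) measurable
  also have "\<dots> \<le> (\<integral>\<^sup>+x. ennreal C \<partial>M)"
  proof (rule nn_integral_mono)
    fix x assume x: "x \<in> space M"
    have "(\<integral>\<^sup>+y. norm (f y) \<partial>N x) = ennreal (\<integral>y. \<bar>f y\<bar> \<partial>N x)"
      using f_int[OF x] by (simp add: nn_integral_eq_integral)
    then show "(\<integral>\<^sup>+y. norm (f y) \<partial>N x) \<le> ennreal C"
      using f_bound[OF x] by (simp add: ennreal_leI)
  qed
  also have "\<dots> < \<infinity>"
    using finite_measure.emeasure_finite[OF M] by (simp add: ennreal_mult_less_top less_top)
  finally show "(\<integral>\<^sup>+y. norm (f y) \<partial>(M \<bind> N)) < \<infinity>" .
qed

section \<open>Product measures\<close>

lemma integral_PiM_average: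
  fixes f :: "_ \<Rightarrow> real"
  assumes M: "prob_space M" and f: "integrable M f" and n: "n > 0"
  shows "(\<integral>\<omega>. 1 / real n * (\<Sum>i<n. f (\<omega> i)) \<partial>PiM {..<n} (\<lambda>_. M)) = integral\<^sup>L M f"
proof -
  have f_meas: "f \<in> borel_measurable M"
    using f by simp
  have component: "(\<lambda>\<omega>. \<omega> i) \<in> measurable (PiM {..<n} (\<lambda>_. M)) M"
    and marginal: "distr (PiM {..<n} (\<lambda>_. M)) M (\<lambda>\<omega>. \<omega> i) = M" if "i < n" for i
    using that M by (auto intro: measurable_component_singleton distr_PiM_component)
  have "integrable (PiM {..<n} (\<lambda>_. M)) (\<lambda>\<omega>. f (\<omega> i))"
    and "(\<integral>\<omega>. f (\<omega> i) \<partial>PiM {..<n} (\<lambda>_. M)) = integral\<^sup>L M f" if "i < n" for i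
    using integrable_distr_eq[OF component[OF that] f_meas] integral_distr[OF component[OF that] f_meas]
      marginal[OF that] f by simp_all
  then show ?thesis
    using n by (simp add: integral_sum)
qed

lemma (in pair_sigma_finite)
  fixes f g :: "_ \<Rightarrow> real"
  assumes f: "integrable M1 f" and g: "integrable M2 g"
  shows integrable_fst_mult_snd: "integrable (M1 \<Otimes>\<^sub>M M2) (\<lambda>z. f (fst z) * g (snd z))"
    and integral_fst_mult_snd:
      "(\<integral>z. f (fst z) * g (snd z) \<partial>(M1 \<Otimes>\<^sub>M M2)) = integral\<^sup>L M1 f * integral\<^sup>L M2 g"
proof -
  show int: "integrable (M1 \<Otimes>\<^sub>M M2) (\<lambda>z. f (fst z) * g (snd z))"
    using f g by (intro Fubini_integrable) (auto simp: abs_mult)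
  then show "(\<integral>z. f (fst z) * g (snd z) \<partial>(M1 \<Otimes>\<^sub>M M2)) = integral\<^sup>L M1 f * integral\<^sup>L M2 g"
    using integral_fst'[of "\<lambda>z. f (fst z) * g (snd z)"] by simp
qed

section \<open>Distributions on a finite action set\<close>

lemma sum_importance_weight:
  fixes p q :: "'a \<Rightarrow> real"
  assumes "\<And>a. a \<in> A \<Longrightarrow> p a = 0 \<Longrightarrow> q a = 0"
  shows "(\<Sum>a\<in>A. p a * (q a / p a) * y a) = (\<Sum>a\<in>A. q a * y a)"
  using assms by (intro sum.cong) auto

lemma abs_convex_combination_le:
  fixes w y :: "'a \<Rightarrow> real"
  assumes "\<And>a. a \<in> A \<Longrightarrow> 0 \<le> w a" "sum w A = 1" "\<And>a. a \<in> A \<Longrightarrow> \<bar>y a\<bar> \<le> M"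
  shows "\<bar>\<Sum>a\<in>A. w a * y a\<bar> \<le> M"
proof -
  have "\<bar>\<Sum>a\<in>A. w a * y a\<bar> \<le> (\<Sum>a\<in>A. w a * M)"
    using assms(1,3) by (intro order_trans[OF sum_abs] sum_mono) (auto simp: abs_mult intro: mult_left_mono)
  also have "\<dots> = M"
    using assms(2) by (simp add: sum_distrib_right[symmetric])
  finally show ?thesis .
qed

lemma sets_act_dist[simp, measurable_cong]: "sets (act_dist p) = sets (count_space UNIV)"
  by (simp add: act_dist_def)

lemma space_act_dist[simp]: "space (act_dist p) = UNIV"
  by (simp add: act_dist_def)

lemma emeasure_act_dist:
  fixes p :: "'a::finite \<Rightarrow> real"
  shows "emeasure (act_dist p) A = (\<Sum>a\<in>A. ennreal (p a))"
proof -
  have "emeasure (act_dist p) A = (\<Sum>a\<in>UNIV. ennreal (p a) * indicator A a)"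
    unfolding act_dist_def by (simp add: emeasure_density nn_integral_count_space_finite)
  also have "\<dots> = (\<Sum>a\<in>A. ennreal (p a))"
    by (simp add: sum.If_cases indicator_def Int_absorb1)
  finally show ?thesis .
qed

lemma prob_space_act_dist:
  fixes p :: "'a::finite \<Rightarrow> real"
  assumes "\<And>a. p a \<ge> 0" "(\<Sum>a\<in>UNIV. p a) = 1"
  shows "prob_space (act_dist p)"
  by standard (use assms in \<open>simp add: emeasure_act_dist sum_ennreal\<close>)

lemma nn_integral_act_dist:
  fixes p :: "'a::finite \<Rightarrow> real"
  shows "(\<integral>\<^sup>+a. g a \<partial>act_dist p) = (\<Sum>a\<in>UNIV. ennreal (p a) * g a)"
  unfolding act_dist_def by (simp add: nn_integral_density nn_integral_count_space_finite)

lemma integral_act_dist: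
  fixes p :: "'a::finite \<Rightarrow> real" and g :: "'a \<Rightarrow> real"
  assumes "\<And>a. p a \<ge> 0"
  shows "(\<integral>a. g a \<partial>act_dist p) = (\<Sum>a\<in>UNIV. p a * g a)"
  unfolding act_dist_def using assms
  by (simp add: integral_density lebesgue_integral_count_space_finite)

lemma measurable_act_dist:
  fixes p :: "'b \<Rightarrow> 'a::finite \<Rightarrow> real"
  assumes "\<And>a. (\<lambda>y. p y a) \<in> borel_measurable M"
    and "\<And>y a. p y a \<ge> 0" and "\<And>y. (\<Sum>a\<in>UNIV. p y a) = 1"
  shows "(\<lambda>y. act_dist (p y)) \<in> measurable M (subprob_algebra (count_space UNIV))"
proof (rule measurable_subprob_algebra)
  show "subprob_space (act_dist (p y))" for y
    using prob_space_act_dist[of "p y"] assms by (simp add: prob_space_imp_subprob_space)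
  show "(\<lambda>y. emeasure (act_dist (p y)) A) \<in> borel_measurable M" for A :: "'a set"
    unfolding emeasure_act_dist using assms(1) by measurable
qed simp

lemma
  fixes p :: "'a::finite \<Rightarrow> real" and f :: "_ \<Rightarrow> real"
  assumes p_nonneg: "\<And>a. p a \<ge> 0"
    and N_subprob: "\<And>a. subprob_space (N a)" and N_sets: "\<And>a. sets (N a) = sets B"
    and f[measurable]: "f \<in> borel_measurable B" and f_int: "\<And>a. integrable (N a) f"
  shows integrable_act_dist_bind: "integrable (act_dist p \<bind> N) f"
    and integral_act_dist_bind: "integral\<^sup>L (act_dist p \<bind> N) f = (\<Sum>a\<in>UNIV. p a * integral\<^sup>L (N a) f)"
proof -
  have N[measurable]: "N \<in> measurable (act_dist p) (subprob_algebra B)"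
    using N_subprob N_sets
    by (simp add: measurable_cong_sets[OF sets_act_dist refl] measurable_count_space_eq1 space_subprob_algebra)
  have "(\<integral>\<^sup>+y. norm (f y) \<partial>(act_dist p \<bind> N)) = (\<Sum>a\<in>UNIV. ennreal (p a) * \<integral>\<^sup>+y. norm (f y) \<partial>N a)"
    by (subst nn_integral_bind[OF _ N]) (simp_all add: nn_integral_act_dist)
  also have "\<dots> < \<infinity>"
    using f_int by (simp add: integrable_iff_bounded ennreal_mult_less_top)
  finally show int: "integrable (act_dist p \<bind> N) f"
    by (intro integrableI_bounded) (simp add: measurable_cong_sets[OF sets_bind[OF sets_kernel[OF N]]])
  show "integral\<^sup>L (act_dist p \<bind> N) f = (\<Sum>a\<in>UNIV. p a * integral\<^sup>L (N a) f)"
    by (simp add: integral_bind_integrable[OF f N int] integral_act_dist p_nonneg)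
qed

section \<open>The logging model\<close>

definition opfv_summand ::
  "(real \<Rightarrow> 'l) \<Rightarrow> (real \<Rightarrow> real) \<Rightarrow> real \<Rightarrow> real
     \<Rightarrow> ('x \<Rightarrow> real \<Rightarrow> 'a::finite \<Rightarrow> real) \<Rightarrow> ('x \<Rightarrow> real \<Rightarrow> 'a \<Rightarrow> real)
     \<Rightarrow> ('x \<Rightarrow> real \<Rightarrow> 'a \<Rightarrow> real) \<Rightarrow> 'x \<times> real \<times> 'a \<times> real \<Rightarrow> real" where
  "opfv_summand phi pt T t' pie pi0 fhat = (\<lambda>(x, t, a, r).
     ind_phi phi t t' / p_phi phi pt T t' * (pie x t' a / pi0 x t a) * (r - fhat x t a)
     + (\<Sum>b\<in>UNIV. pie x t' b * fhat x t' b))"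

lemma opfv_eq_average:
  "opfv phi pt T t' pie pi0 fhat n D = 1 / real n * (\<Sum>i<n. opfv_summand phi pt T t' pie pi0 fhat (D i))"
  unfolding opfv_def opfv_summand_def ..

locale opfv_model =
  fixes Px :: "'x measure" and pt :: "real \<Rightarrow> real" and T t' rmax :: real
    and pi0 pie :: "'x \<Rightarrow> real \<Rightarrow> 'a::finite \<Rightarrow> real"
    and R :: "'x \<Rightarrow> real \<Rightarrow> 'a \<Rightarrow> real measure"
    and fhat :: "'x \<Rightarrow> real \<Rightarrow> 'a \<Rightarrow> real"
    and phi :: "real \<Rightarrow> 'l"
  assumes Px_prob: "prob_space Px"
    and pt_meas: "pt \<in> borel_measurable borel"
    and pt_nonneg: "\<And>t. pt t \<ge> 0"
    and pt_supp: "\<And>t. t \<notin> {0..T} \<Longrightarrow> pt t = 0"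
    and pt_prob: "prob_space (density lborel (\<lambda>t. ennreal (pt t)))"
    and pi0_nonneg: "\<And>x t a. pi0 x t a \<ge> 0"
    and pi0_sum: "\<And>x t. (\<Sum>a\<in>UNIV. pi0 x t a) = 1"
    and pie_nonneg: "\<And>x t a. pie x t a \<ge> 0"
    and pie_sum: "\<And>x t. (\<Sum>a\<in>UNIV. pie x t a) = 1"
    and pi0_meas: "\<And>a. (\<lambda>(x, t). pi0 x t a) \<in> borel_measurable (Px \<Otimes>\<^sub>M borel)"
    and pie_meas: "\<And>a. (\<lambda>x. pie x t' a) \<in> borel_measurable Px"
    and R_prob: "\<And>x t a. prob_space (R x t a)"
    and R_sets: "\<And>x t a. sets (R x t a) = sets borel"
    and R_range: "\<And>x t a. AE r in R x t a. 0 \<le> r \<and> r \<le> rmax"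
    and R_meas: "(\<lambda>(x, t, a). R x t a)
                   \<in> measurable (Px \<Otimes>\<^sub>M borel \<Otimes>\<^sub>M count_space UNIV) (subprob_algebra borel)"
    and fhat_meas: "\<And>a. (\<lambda>(x, t). fhat x t a) \<in> borel_measurable (Px \<Otimes>\<^sub>M borel)"
    and fhat_bdd: "\<exists>B. \<forall>x t a. \<bar>fhat x t a\<bar> \<le> B"
    and phi_meas: "{s. phi s = phi t'} \<in> sets borel"
    and p_phi_pos: "p_phi phi pt T t' > 0"
    and common_support: "\<And>x t a. x \<in> space Px \<Longrightarrow> t \<in> {0..T} \<Longrightarrow> pie x t' a > 0 \<Longrightarrow> pi0 x t a > 0"
begin

lemma measurable_pi0[measurable (raw)]:
  assumes [measurable]: "f \<in> measurable M Px" "g \<in> borel_measurable M" "h \<in> measurable M (count_space UNIV)"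
  shows "(\<lambda>w. pi0 (f w) (g w) (h w)) \<in> borel_measurable M"
proof (rule measurable_compose_countable[OF _ assms(3)])
  show "(\<lambda>w. pi0 (f w) (g w) a) \<in> borel_measurable M" for a
    using measurable_compose[of "\<lambda>w. (f w, g w)" M "Px \<Otimes>\<^sub>M borel", OF _ pi0_meas[of a]] by simp
qed

lemma measurable_fhat[measurable (raw)]:
  assumes [measurable]: "f \<in> measurable M Px" "g \<in> borel_measurable M" "h \<in> measurable M (count_space UNIV)"
  shows "(\<lambda>w. fhat (f w) (g w) (h w)) \<in> borel_measurable M"
proof (rule measurable_compose_countable[OF _ assms(3)])
  show "(\<lambda>w. fhat (f w) (g w) a) \<in> borel_measurable M" for a
    using measurable_compose[of "\<lambda>w. (f w, g w)" M "Px \<Otimes>\<^sub>M borel", OF _ fhat_meas[of a]] by simp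
qed

lemma measurable_pie[measurable (raw)]:
  assumes [measurable]: "f \<in> measurable M Px" "h \<in> measurable M (count_space UNIV)"
  shows "(\<lambda>w. pie (f w) t' (h w)) \<in> borel_measurable M"
proof (rule measurable_compose_countable[OF _ assms(2)])
  show "(\<lambda>w. pie (f w) t' a) \<in> borel_measurable M" for a
    using measurable_compose[OF assms(1) pie_meas[of a]] by simp
qed

lemma measurable_R[measurable (raw)]:
  assumes [measurable]: "f \<in> measurable M Px" "g \<in> borel_measurable M" "h \<in> measurable M (count_space UNIV)"
  shows "(\<lambda>w. R (f w) (g w) (h w)) \<in> measurable M (subprob_algebra borel)"
  using measurable_compose[of "\<lambda>w. (f w, g w, h w)" M, OF _ R_meas] by simp

lemma measurable_qfun[measurable (raw)]:
  assumes [measurable]: "f \<in> measurable M Px" "g \<in> borel_measurable M" "h \<in> measurable M (count_space UNIV)"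
  shows "(\<lambda>w. qfun R (f w) (g w) (h w)) \<in> borel_measurable M"
  unfolding qfun_def
  by (rule measurable_compose[OF measurable_R[OF assms] integral_measurable_subprob_algebra]) simp

lemma measurable_ind_phi[measurable (raw)]:
  assumes [measurable]: "g \<in> borel_measurable M"
  shows "(\<lambda>w. ind_phi phi (g w) t') \<in> borel_measurable M"
proof -
  have "(\<lambda>w. ind_phi phi (g w) t') = (\<lambda>w. indicator {s. phi s = phi t'} (g w))"
    by (simp add: ind_phi_def indicator_def fun_eq_iff)
  then show ?thesis
    using phi_meas by simp
qed

abbreviation "time_dist \<equiv> density lborel (\<lambda>t. ennreal (pt t))"

abbreviation "record_space \<equiv> Px \<Otimes>\<^sub>M borel \<Otimes>\<^sub>M count_space UNIV \<Otimes>\<^sub>M borel"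

abbreviation "pphi \<equiv> p_phi phi pt T t'"

abbreviation "summand \<equiv> opfv_summand phi pt T t' pie pi0 fhat"

sublocale Px: prob_space Px
  by (rule Px_prob)

sublocale time: prob_space time_dist
  by (rule pt_prob)

sublocale ctx_time: pair_prob_space Px time_dist ..

lemma sets_time_dist[measurable_cong]: "sets time_dist = sets borel"
  by simp

lemma sets_ctx_time[measurable_cong]: "sets (Px \<Otimes>\<^sub>M time_dist) = sets (Px \<Otimes>\<^sub>M borel)"
  by (rule sets_pair_measure_cong[OF refl sets_time_dist])

lemma space_ctx_time: "space (Px \<Otimes>\<^sub>M time_dist) = space Px \<times> UNIV"
  by (simp add: space_pair_measure)

lemma AE_time_window: "AE z in Px \<Otimes>\<^sub>M time_dist. snd z \<in> {0..T}"
proof (rule ctx_time.AE_pair_measure)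
  have "{z \<in> space (Px \<Otimes>\<^sub>M borel). snd z \<in> {0..T}} \<in> sets (Px \<Otimes>\<^sub>M borel)"
    by measurable
  then show "{z \<in> space (Px \<Otimes>\<^sub>M time_dist). snd z \<in> {0..T}} \<in> sets (Px \<Otimes>\<^sub>M time_dist)"
    unfolding sets_ctx_time sets_eq_imp_space_eq[OF sets_ctx_time] .
  have "AE t in time_dist. t \<in> {0..T}"
    using pt_meas
    by (subst AE_density) (auto intro!: AE_I2 simp del: atLeastAtMost_iff, metis less_irrefl pt_supp)
  then show "AE x in Px. AE t in time_dist. snd (x, t) \<in> {0..T}"
    by simp
qed

lemma integrable_ind_phi_time_dist: "integrable time_dist (\<lambda>t. ind_phi phi t t')"
proof (rule time.integrable_const_bound[where B=1])
  show "AE t in time_dist. norm (ind_phi phi t t') \<le> 1"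
    by (simp add: ind_phi_def)
qed measurable

lemma integral_ind_phi_time_dist: "(\<integral>t. ind_phi phi t t' \<partial>time_dist) = pphi"
proof -
  have "(\<integral>t. ind_phi phi t t' \<partial>time_dist) = (\<integral>t. pt t * ind_phi phi t t' \<partial>lborel)"
    using pt_meas pt_nonneg by (simp add: integral_density)
  also have "\<dots> = (\<integral>s. indicator {0..T} s * pt s * ind_phi phi s t' \<partial>lborel)"
    using pt_supp by (intro Bochner_Integration.integral_cong) (auto simp: indicator_def)
  finally show ?thesis
    unfolding p_phi_def .
qed

definition record_dist :: "'x \<Rightarrow> real \<Rightarrow> ('x \<times> real \<times> 'a \<times> real) measure" where
  "record_dist x t = act_dist (pi0 x t) \<bind> (\<lambda>a. distr (R x t a) record_space (\<lambda>r. (x, t, a, r)))"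

lemma sample_dist_eq_bind: "sample_dist Px M pi0 R = M \<bind> (\<lambda>(x, t). record_dist x t)"
  unfolding sample_dist_def record_dist_def ..

lemma measurable_record_dist:
  "(\<lambda>(x, t). record_dist x t) \<in> measurable (Px \<Otimes>\<^sub>M borel) (subprob_algebra record_space)"
  unfolding record_dist_def split_beta'
proof (rule measurable_bind)
  show "(\<lambda>z. act_dist (pi0 (fst z) (snd z)))
      \<in> measurable (Px \<Otimes>\<^sub>M borel) (subprob_algebra (count_space UNIV))"
    by (rule measurable_act_dist) (auto simp: pi0_nonneg pi0_sum)
  show "(\<lambda>w. distr (R (fst (fst w)) (snd (fst w)) (snd w)) record_space
      (\<lambda>r. (fst (fst w), snd (fst w), snd w, r)))
      \<in> measurable ((Px \<Otimes>\<^sub>M borel) \<Otimes>\<^sub>M count_space UNIV) (subprob_algebra record_space)"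
    by (rule measurable_distr2) measurable
qed

lemma measurable_reward_record: "(\<lambda>r. (x, t, a, r)) \<in> measurable (R x t a) record_space"
  if "x \<in> space Px"
  using that by (simp add: measurable_cong_sets[OF R_sets refl])

lemma
  assumes x: "x \<in> space Px" and g[measurable]: "g \<in> borel_measurable record_space"
    and g_int: "\<And>a. integrable (R x t a) (\<lambda>r. g (x, t, a, r))"
  shows integrable_record_dist: "integrable (record_dist x t) g"
    and integral_record_dist:
      "integral\<^sup>L (record_dist x t) g = (\<Sum>a\<in>UNIV. pi0 x t a * (\<integral>r. g (x, t, a, r) \<partial>R x t a))"
proof -
  note reward = measurable_reward_record[OF x]
  have "subprob_space (distr (R x t a) record_space (\<lambda>r. (x, t, a, r)))" for a
    using prob_space.prob_space_distr[OF R_prob reward] by (simp add: prob_space_imp_subprob_space)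
  moreover have "integrable (distr (R x t a) record_space (\<lambda>r. (x, t, a, r))) g" for a
    using g_int by (simp add: integrable_distr_eq[OF reward])
  ultimately show "integrable (record_dist x t) g"
    and "integral\<^sup>L (record_dist x t) g = (\<Sum>a\<in>UNIV. pi0 x t a * (\<integral>r. g (x, t, a, r) \<partial>R x t a))"
    unfolding record_dist_def
    by (simp_all add: integrable_act_dist_bind integral_act_dist_bind pi0_nonneg integral_distr[OF reward])
qed

lemma prob_space_record_dist: "x \<in> space Px \<Longrightarrow> prob_space (record_dist x t)"
  unfolding record_dist_def
proof (rule prob_space.prob_space_bind)
  show "prob_space (act_dist (pi0 x t))"
    by (intro prob_space_act_dist pi0_nonneg pi0_sum)
  assume x: "x \<in> space Px"
  show "AE a in act_dist (pi0 x t). prob_space (distr (R x t a) record_space (\<lambda>r. (x, t, a, r)))"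
    using prob_space.prob_space_distr[OF R_prob measurable_reward_record[OF x]] by simp
  show "(\<lambda>a. distr (R x t a) record_space (\<lambda>r. (x, t, a, r)))
      \<in> measurable (act_dist (pi0 x t)) (subprob_algebra record_space)"
    using prob_space.prob_space_distr[OF R_prob measurable_reward_record[OF x]]
    by (simp add: measurable_cong_sets[OF sets_act_dist refl] measurable_count_space_eq1
        space_subprob_algebra prob_space_imp_subprob_space)
qed

lemma prob_space_sample_dist: "prob_space (sample_dist Px (Px \<Otimes>\<^sub>M time_dist) pi0 R)"
  unfolding sample_dist_eq_bind
proof (rule ctx_time.P.prob_space_bind)
  show "AE z in Px \<Otimes>\<^sub>M time_dist. prob_space (case z of (x, t) \<Rightarrow> record_dist x t)"
    by (intro AE_I2) (auto simp: space_ctx_time prob_space_record_dist)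
  show "(\<lambda>(x, t). record_dist x t) \<in> measurable (Px \<Otimes>\<^sub>M time_dist) (subprob_algebra record_space)"
    using measurable_record_dist by (simp add: measurable_cong_sets[OF sets_ctx_time refl])
qed

lemma integrable_reward: "integrable (R x t a) (\<lambda>r. r)"
proof -
  interpret prob_space "R x t a"
    by (rule R_prob)
  show ?thesis
    using R_range[of x t a]
    by (intro integrable_const_bound[where B=rmax]) (auto simp: measurable_cong_sets[OF R_sets refl])
qed

lemma
  shows integrable_reward_affine: "integrable (R x t a) (\<lambda>r. c * r + d)"
    and integral_reward_affine: "(\<integral>r. c * r + d \<partial>R x t a) = c * qfun R x t a + d"
proof -
  interpret prob_space "R x t a"
    by (rule R_prob)
  show "integrable (R x t a) (\<lambda>r. c * r + d)"
    using integrable_reward[of x t a] by simp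
  show "(\<integral>r. c * r + d \<partial>R x t a) = c * qfun R x t a + d"
    using integrable_reward[of x t a] by (simp add: qfun_def prob_space)
qed

lemma qfun_bounds: "0 \<le> qfun R x t a" "qfun R x t a \<le> rmax"
proof -
  interpret prob_space "R x t a"
    by (rule R_prob)
  show "0 \<le> qfun R x t a"
    unfolding qfun_def using R_range[of x t a] by (intro integral_nonneg_AE) auto
  have "qfun R x t a \<le> (\<integral>r. rmax \<partial>R x t a)"
    unfolding qfun_def using R_range[of x t a] integrable_reward
    by (intro integral_mono_AE) (auto elim: eventually_mono)
  then show "qfun R x t a \<le> rmax"
    by (simp add: prob_space)
qed

definition weight :: "'x \<Rightarrow> real \<Rightarrow> 'a \<Rightarrow> real" where
  "weight x t a = ind_phi phi t t' / pphi * (pie x t' a / pi0 x t a)"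

definition dm_term :: "'x \<Rightarrow> real" where
  "dm_term x = (\<Sum>b\<in>UNIV. pie x t' b * fhat x t' b)"

definition residual :: "'x \<Rightarrow> real \<Rightarrow> real" where
  "residual x s = (\<Sum>a\<in>UNIV. pie x t' a * (qfun R x s a - fhat x s a))"

lemma summand_eq: "summand (x, t, a, r) = weight x t a * (r - fhat x t a) + dm_term x"
  by (simp add: opfv_summand_def weight_def dm_term_def)

lemma measurable_summand[measurable]: "summand \<in> borel_measurable record_space"
  unfolding opfv_summand_def by measurable

lemma measurable_dm_term[measurable]: "dm_term \<in> borel_measurable Px"
  unfolding dm_term_def by measurable

lemma measurable_residual[measurable (raw)]:
  assumes [measurable]: "f \<in> measurable M Px" "g \<in> borel_measurable M"
  shows "(\<lambda>w. residual (f w) (g w)) \<in> borel_measurable M"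
  unfolding residual_def by measurable

lemma weight_nonneg: "0 \<le> weight x t a"
  using p_phi_pos by (simp add: weight_def ind_phi_def pie_nonneg pi0_nonneg)

lemma dm_term_abs_le: "\<bar>dm_term x\<bar> \<le> B" if "\<And>x t a. \<bar>fhat x t a\<bar> \<le> B"
  unfolding dm_term_def using that by (intro abs_convex_combination_le) (auto simp: pie_nonneg pie_sum)

lemma residual_abs_le: "\<bar>residual x s\<bar> \<le> rmax + B" if "\<And>x t a. \<bar>fhat x t a\<bar> \<le> B"
  unfolding residual_def
proof (intro abs_convex_combination_le)
  show "\<bar>qfun R x s a - fhat x s a\<bar> \<le> rmax + B" for a
    using qfun_bounds[of x s a] that[of x s a] by linarith
qed (auto simp: pie_nonneg pie_sum)

lemma summand_affine:
  "summand (x, t, a, r) = weight x t a * r + (dm_term x - weight x t a * fhat x t a)"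
  by (simp add: summand_eq algebra_simps)

lemma integrable_summand_reward: "integrable (R x t a) (\<lambda>r. summand (x, t, a, r))"
  unfolding summand_affine by (rule integrable_reward_affine)

lemma integral_summand_reward:
  "(\<integral>r. summand (x, t, a, r) \<partial>R x t a) = weight x t a * (qfun R x t a - fhat x t a) + dm_term x"
  unfolding summand_affine integral_reward_affine by (simp add: algebra_simps)

lemma integral_record_dist_summand:
  assumes x: "x \<in> space Px" and t: "t \<in> {0..T}"
  shows "integral\<^sup>L (record_dist x t) summand = ind_phi phi t t' / pphi * residual x t + dm_term x"
proof -
  define y where "y a = ind_phi phi t t' / pphi * (qfun R x t a - fhat x t a)" for a
  have "pie x t' a = 0" if "a \<in> UNIV" "pi0 x t a = 0" for a
    using common_support[OF x t, of a] pie_nonneg[of x t' a] that by linarith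
  then have importance_weight:
    "(\<Sum>a\<in>UNIV. pi0 x t a * (pie x t' a / pi0 x t a) * y a) = (\<Sum>a\<in>UNIV. pie x t' a * y a)"
    by (rule sum_importance_weight)
  have "integral\<^sup>L (record_dist x t) summand
      = (\<Sum>a\<in>UNIV. pi0 x t a * (weight x t a * (qfun R x t a - fhat x t a) + dm_term x))"
    by (simp add: integral_record_dist[OF x measurable_summand integrable_summand_reward]
        integral_summand_reward)
  also have "\<dots> = (\<Sum>a\<in>UNIV. pi0 x t a * (pie x t' a / pi0 x t a) * y a + pi0 x t a * dm_term x)"
    by (simp only: weight_def y_def distrib_left mult_ac)
  also have "\<dots> = (\<Sum>a\<in>UNIV. pie x t' a * y a) + dm_term x"
    by (simp only: sum.distrib importance_weight sum_distrib_right[symmetric] pi0_sum mult_1)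
  also have "\<dots> = ind_phi phi t t' / pphi * residual x t + dm_term x"
    by (simp add: y_def residual_def sum_distrib_left mult_ac)
  finally show ?thesis .
qed

lemma sum_pi0_weight_le: "(\<Sum>a\<in>UNIV. pi0 x t a * weight x t a) \<le> 1 / pphi"
proof -
  define S where "S = (\<Sum>a\<in>UNIV. pi0 x t a * (pie x t' a / pi0 x t a))"
  have "pi0 x t a * (pie x t' a / pi0 x t a) \<le> pie x t' a" for a
    using pi0_nonneg[of x t a] pie_nonneg[of x t' a] by (cases "pi0 x t a = 0") auto
  then have "S \<le> (\<Sum>a\<in>UNIV. pie x t' a)"
    unfolding S_def by (rule sum_mono)
  then have "S \<le> 1"
    by (simp only: pie_sum)
  moreover have "0 \<le> S"
    unfolding S_def by (intro sum_nonneg mult_nonneg_nonneg divide_nonneg_nonneg pi0_nonneg pie_nonneg)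
  moreover have "0 \<le> ind_phi phi t t' / pphi" "ind_phi phi t t' / pphi \<le> 1 / pphi"
    using p_phi_pos by (simp_all add: ind_phi_def)
  ultimately have "ind_phi phi t t' / pphi * S \<le> 1 / pphi * 1"
    using p_phi_pos by (intro mult_mono) auto
  moreover have "(\<Sum>a\<in>UNIV. pi0 x t a * weight x t a) = ind_phi phi t t' / pphi * S"
    unfolding S_def weight_def sum_distrib_left by (simp only: mult_ac)
  ultimately show ?thesis
    by simp
qed

lemma integral_record_dist_abs_summand_le:
  assumes x: "x \<in> space Px" and B: "\<And>x t a. \<bar>fhat x t a\<bar> \<le> B"
  shows "(\<integral>w. \<bar>summand w\<bar> \<partial>record_dist x t) \<le> (rmax + B) / pphi + B"
proof -
  have rmax_B: "0 \<le> rmax + B"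
    using qfun_bounds[of x t undefined] B[of x t undefined] by linarith
  have per_action: "(\<integral>r. \<bar>summand (x, t, a, r)\<bar> \<partial>R x t a) \<le> weight x t a * (rmax + B) + B" for a
  proof -
    interpret prob_space "R x t a"
      by (rule R_prob)
    have "\<bar>summand (x, t, a, r)\<bar> \<le> weight x t a * (rmax + B) + B" if "0 \<le> r \<and> r \<le> rmax" for r
    proof -
      have "\<bar>summand (x, t, a, r)\<bar> \<le> weight x t a * \<bar>r - fhat x t a\<bar> + \<bar>dm_term x\<bar>"
        unfolding summand_eq using abs_triangle_ineq[of "weight x t a * (r - fhat x t a)" "dm_term x"]
        by (simp add: abs_mult weight_nonneg)
      also have "\<dots> \<le> weight x t a * (rmax + B) + B"
        using that B[of x t a] dm_term_abs_le[OF B, of x] weight_nonneg[of x t a]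
        by (intro add_mono mult_left_mono) auto
      finally show ?thesis .
    qed
    then have "(\<integral>r. \<bar>summand (x, t, a, r)\<bar> \<partial>R x t a) \<le> (\<integral>r. weight x t a * (rmax + B) + B \<partial>R x t a)"
      using R_range[of x t a] integrable_summand_reward
      by (intro integral_mono_AE) (auto elim: eventually_mono)
    then show ?thesis
      by (simp add: prob_space)
  qed
  have "(\<integral>w. \<bar>summand w\<bar> \<partial>record_dist x t) = (\<Sum>a\<in>UNIV. pi0 x t a * (\<integral>r. \<bar>summand (x, t, a, r)\<bar> \<partial>R x t a))"
    using integrable_summand_reward by (intro integral_record_dist[OF x]) auto
  also have "\<dots> \<le> (\<Sum>a\<in>UNIV. pi0 x t a * (weight x t a * (rmax + B) + B))"
    by (intro sum_mono mult_left_mono per_action pi0_nonneg)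
  also have "\<dots> = (rmax + B) * (\<Sum>a\<in>UNIV. pi0 x t a * weight x t a) + B"
    by (simp add: distrib_left sum.distrib sum_distrib_right[symmetric] pi0_sum mult_ac
        flip: sum_distrib_left)
  also have "\<dots> \<le> (rmax + B) / pphi + B"
    using mult_left_mono[OF sum_pi0_weight_le rmax_B] by simp
  finally show ?thesis .
qed

lemma integrable_dm_term: "integrable Px dm_term"
proof -
  obtain B where B: "\<And>x t a. \<bar>fhat x t a\<bar> \<le> B"
    using fhat_bdd by blast
  show ?thesis
    using dm_term_abs_le[OF B] by (intro Px.integrable_const_bound[where B=B]) auto
qed

lemma integrable_residual: "integrable Px (\<lambda>x. residual x s)"
proof -
  obtain B where B: "\<And>x t a. \<bar>fhat x t a\<bar> \<le> B"
    using fhat_bdd by blast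
  show ?thesis
    using residual_abs_le[OF B] by (intro Px.integrable_const_bound[where B="rmax + B"]) auto
qed

lemma integrable_ind_phi_residual:
  assumes [measurable]: "s \<in> borel_measurable (Px \<Otimes>\<^sub>M borel)"
  shows "integrable (Px \<Otimes>\<^sub>M time_dist) (\<lambda>z. ind_phi phi (snd z) t' / pphi * residual (fst z) (s z))"
proof -
  obtain B where B: "\<And>x t a. \<bar>fhat x t a\<bar> \<le> B"
    using fhat_bdd by blast
  have "\<bar>ind_phi phi t t' / pphi * residual x u\<bar> \<le> (rmax + B) / pphi" for x t u
    using residual_abs_le[OF B, of x u] p_phi_pos
    by (auto simp: ind_phi_def abs_mult divide_right_mono)
  then show ?thesis
    by (intro ctx_time.integrable_const_bound[where B="(rmax + B) / pphi"]) auto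
qed

lemma
  fixes f :: "'x \<Rightarrow> real"
  assumes "integrable Px f"
  shows integrable_ctx_time_fst: "integrable (Px \<Otimes>\<^sub>M time_dist) (\<lambda>z. f (fst z))"
    and integral_ctx_time_fst: "(\<integral>z. f (fst z) \<partial>(Px \<Otimes>\<^sub>M time_dist)) = integral\<^sup>L Px f"
  using ctx_time.integrable_fst_mult_snd[OF assms, of "\<lambda>_. 1"]
    ctx_time.integral_fst_mult_snd[OF assms, of "\<lambda>_. 1"] time.prob_space
  by simp_all

lemma
  shows integrable_sample_summand: "integrable (sample_dist Px (Px \<Otimes>\<^sub>M time_dist) pi0 R) summand"
    and integral_sample_summand: "integral\<^sup>L (sample_dist Px (Px \<Otimes>\<^sub>M time_dist) pi0 R) summand
      = (\<integral>z. ind_phi phi (snd z) t' / pphi * residual (fst z) (snd z) \<partial>(Px \<Otimes>\<^sub>M time_dist))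
        + integral\<^sup>L Px dm_term"
proof -
  obtain B where B: "\<And>x t a. \<bar>fhat x t a\<bar> \<le> B"
    using fhat_bdd by blast
  have K: "(\<lambda>(x, t). record_dist x t) \<in> measurable (Px \<Otimes>\<^sub>M time_dist) (subprob_algebra record_space)"
    using measurable_record_dist by (simp add: measurable_cong_sets[OF sets_ctx_time refl])
  show int: "integrable (sample_dist Px (Px \<Otimes>\<^sub>M time_dist) pi0 R) summand"
    unfolding sample_dist_eq_bind
    using integrable_record_dist[OF _ measurable_summand integrable_summand_reward]
      integral_record_dist_abs_summand_le[OF _ B]
    by (intro integrable_bind_uniform[OF ctx_time.P.finite_measure_axioms K measurable_summand])
      (auto simp: space_ctx_time)
  have "integral\<^sup>L (sample_dist Px (Px \<Otimes>\<^sub>M time_dist) pi0 R) summand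
      = (\<integral>z. integral\<^sup>L (record_dist (fst z) (snd z)) summand \<partial>(Px \<Otimes>\<^sub>M time_dist))"
    using integral_bind_integrable[OF measurable_summand K] int
    by (simp add: sample_dist_eq_bind split_beta')
  also have "\<dots> = (\<integral>z. ind_phi phi (snd z) t' / pphi * residual (fst z) (snd z) + dm_term (fst z)
                     \<partial>(Px \<Otimes>\<^sub>M time_dist))"
  proof (rule integral_cong_AE)
    show "(\<lambda>z. integral\<^sup>L (record_dist (fst z) (snd z)) summand) \<in> borel_measurable (Px \<Otimes>\<^sub>M time_dist)"
      using measurable_compose[OF K integral_measurable_subprob_algebra[OF measurable_summand]]
      by (simp add: split_beta')
    show "AE z in Px \<Otimes>\<^sub>M time_dist. integral\<^sup>L (record_dist (fst z) (snd z)) summand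
        = ind_phi phi (snd z) t' / pphi * residual (fst z) (snd z) + dm_term (fst z)"
      using AE_time_window AE_space
      by eventually_elim (auto simp: space_ctx_time integral_record_dist_summand)
  qed measurable
  also have "\<dots> = (\<integral>z. ind_phi phi (snd z) t' / pphi * residual (fst z) (snd z) \<partial>(Px \<Otimes>\<^sub>M time_dist))
                   + integral\<^sup>L Px dm_term"
    using Bochner_Integration.integral_add[OF integrable_ind_phi_residual[of snd]
        integrable_ctx_time_fst[OF integrable_dm_term]]
    by (simp add: integral_ctx_time_fst[OF integrable_dm_term])
  finally show "integral\<^sup>L (sample_dist Px (Px \<Otimes>\<^sub>M time_dist) pi0 R) summand
      = (\<integral>z. ind_phi phi (snd z) t' / pphi * residual (fst z) (snd z) \<partial>(Px \<Otimes>\<^sub>M time_dist))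
        + integral\<^sup>L Px dm_term" .
qed

lemma expectation_opfv:
  assumes "n > 0"
  shows "integral\<^sup>L (data_dist n Px (Px \<Otimes>\<^sub>M time_dist) pi0 R) (opfv phi pt T t' pie pi0 fhat n)
    = integral\<^sup>L (sample_dist Px (Px \<Otimes>\<^sub>M time_dist) pi0 R) summand"
  unfolding data_dist_def opfv_eq_average
  by (rule integral_PiM_average[OF prob_space_sample_dist integrable_sample_summand assms])

lemma policy_value_eq: "policy_value Px pie R t' = (\<integral>x. residual x t' \<partial>Px) + integral\<^sup>L Px dm_term"
proof -
  have "(\<Sum>a\<in>UNIV. pie x t' a * qfun R x t' a) = residual x t' + dm_term x" for x
    by (simp add: residual_def dm_term_def algebra_simps sum.distrib[symmetric])
  then show ?thesis
    unfolding policy_value_def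
    using Bochner_Integration.integral_add[OF integrable_residual integrable_dm_term] by simp
qed

lemma bias_opfv:
  assumes "n > 0"
  shows "integral\<^sup>L (data_dist n Px (Px \<Otimes>\<^sub>M time_dist) pi0 R) (opfv phi pt T t' pie pi0 fhat n)
           - policy_value Px pie R t'
         = integral\<^sup>L (Px \<Otimes>\<^sub>M time_dist) (\<lambda>(x, t). \<Sum>a\<in>UNIV. pie x t' a *
             (ind_phi phi t t' / pphi
               * ((qfun R x t a - qfun R x t' a) - (fhat x t a - fhat x t' a))))"
proof -
  have integrand: "(\<Sum>a\<in>UNIV. pie x t' a * (ind_phi phi t t' / pphi
        * ((qfun R x t a - qfun R x t' a) - (fhat x t a - fhat x t' a))))
      = ind_phi phi t t' / pphi * residual x t - ind_phi phi t t' / pphi * residual x t'" for x t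
  proof -
    have "p * (c * ((q - q') - (f - f'))) = c * (p * (q - f)) - c * (p * (q' - f'))"
      for p c q q' f f' :: real
      by (simp add: algebra_simps)
    then show ?thesis
      unfolding residual_def sum_distrib_left sum_subtractf[symmetric] by (simp only:)
  qed
  have "integral\<^sup>L (Px \<Otimes>\<^sub>M time_dist) (\<lambda>(x, t). \<Sum>a\<in>UNIV. pie x t' a *
             (ind_phi phi t t' / pphi
               * ((qfun R x t a - qfun R x t' a) - (fhat x t a - fhat x t' a))))
      = (\<integral>z. ind_phi phi (snd z) t' / pphi * residual (fst z) (snd z)
             - ind_phi phi (snd z) t' / pphi * residual (fst z) t' \<partial>(Px \<Otimes>\<^sub>M time_dist))"
    by (intro Bochner_Integration.integral_cong) (auto simp only: integrand fst_conv snd_conv split: prod.split)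
  also have "\<dots> = (\<integral>z. ind_phi phi (snd z) t' / pphi * residual (fst z) (snd z) \<partial>(Px \<Otimes>\<^sub>M time_dist))
      - (\<integral>z. ind_phi phi (snd z) t' / pphi * residual (fst z) t' \<partial>(Px \<Otimes>\<^sub>M time_dist))"
    by (rule Bochner_Integration.integral_diff[OF integrable_ind_phi_residual integrable_ind_phi_residual])
      measurable
  also have "(\<integral>z. ind_phi phi (snd z) t' / pphi * residual (fst z) t' \<partial>(Px \<Otimes>\<^sub>M time_dist))
      = (\<integral>x. residual x t' \<partial>Px)"
    using ctx_time.integral_fst_mult_snd[OF integrable_residual, of "\<lambda>t. ind_phi phi t t' / pphi"]
      integrable_ind_phi_time_dist integral_ind_phi_time_dist p_phi_pos
    by (simp add: mult.commute)
  finally show ?thesis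
    by (simp add: expectation_opfv[OF assms] integral_sample_summand policy_value_eq)
qed

end

theorem theorem3p3:
  fixes Px :: "'x measure" and Px_t' :: "'x measure" and Pxt :: "('x \<times> real) measure"
    and pt :: "real \<Rightarrow> real" and T t' rmax :: real and n :: nat
    and pi0 pie :: "'x \<Rightarrow> real \<Rightarrow> 'a::finite \<Rightarrow> real"
    and R :: "'x \<Rightarrow> real \<Rightarrow> 'a \<Rightarrow> real measure"
    and fhat :: "'x \<Rightarrow> real \<Rightarrow> 'a \<Rightarrow> real"
    and phi :: "real \<Rightarrow> 'l"
  assumes n_pos: "n > 0"
    and T_pos: "T > 0" and t'_gt: "t' > T"
    \<comment> \<open>context distribution p(x) and time density p(t) supported on [0,T]\<close>
    and Px_prob: "prob_space Px"
    and pt_meas: "pt \<in> borel_measurable borel"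
    and pt_nonneg: "\<And>t. pt t \<ge> 0"
    and pt_supp: "\<And>t. t \<notin> {0..T} \<Longrightarrow> pt t = 0"
    and pt_prob: "prob_space (density lborel (\<lambda>t. ennreal (pt t)))"
    \<comment> \<open>stationarity: p(x,t) = p(x) p(t) and p(x|t') = p(x)\<close>
    and stationary: "Pxt = Px \<Otimes>\<^sub>M density lborel (\<lambda>t. ennreal (pt t))"
    and target_ctx: "Px_t' = Px"
    \<comment> \<open>policies are probability distributions over the finite action set\<close>
    and pi0_nonneg: "\<And>x t a. pi0 x t a \<ge> 0"
    and pi0_sum: "\<And>x t. (\<Sum>a\<in>UNIV. pi0 x t a) = 1"
    and pie_nonneg: "\<And>x t a. pie x t a \<ge> 0"
    and pie_sum: "\<And>x t. (\<Sum>a\<in>UNIV. pie x t a) = 1"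
    and pi0_meas: "\<And>a. (\<lambda>(x, t). pi0 x t a) \<in> borel_measurable (Px \<Otimes>\<^sub>M borel)"
    and pie_meas: "\<And>a. (\<lambda>x. pie x t' a) \<in> borel_measurable Px"
    \<comment> \<open>reward distributions p(r|x,t,a), rewards in [0, rmax], measurable kernel\<close>
    and rmax_nonneg: "rmax \<ge> 0"
    and R_prob: "\<And>x t a. prob_space (R x t a)"
    and R_sets: "\<And>x t a. sets (R x t a) = sets borel"
    and R_range: "\<And>x t a. AE r in R x t a. 0 \<le> r \<and> r \<le> rmax"
    and R_meas: "(\<lambda>(x, t, a). R x t a)
                   \<in> measurable (Px \<Otimes>\<^sub>M borel \<Otimes>\<^sub>M count_space UNIV) (subprob_algebra borel)"
    \<comment> \<open>fixed reward regressor (measurable and bounded)\<close>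
    and fhat_meas: "\<And>a. (\<lambda>(x, t). fhat x t a) \<in> borel_measurable (Px \<Otimes>\<^sub>M borel)"
    and fhat_bdd: "\<exists>B. \<forall>x t a. \<bar>fhat x t a\<bar> \<le> B"
    \<comment> \<open>time feature function\<close>
    and phi_meas: "{s. phi s = phi t'} \<in> sets borel"
    and p_phi_pos: "p_phi phi pt T t' > 0"
    \<comment> \<open>common support\<close>
    and common_support: "\<And>x t a. x \<in> space Px \<Longrightarrow> t \<in> {0..T} \<Longrightarrow> pie x t' a > 0 \<Longrightarrow> pi0 x t a > 0"
  shows "integral\<^sup>L (data_dist n Px Pxt pi0 R) (opfv phi pt T t' pie pi0 fhat n)
           - policy_value Px_t' pie R t'
         = integral\<^sup>L Pxt (\<lambda>(x, t). \<Sum>a\<in>UNIV. pie x t' a *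
             (ind_phi phi t t' / p_phi phi pt T t'
               * ((qfun R x t a - qfun R x t' a) - (fhat x t a - fhat x t' a))))"
proof -
  interpret opfv_model Px pt T t' rmax pi0 pie R fhat phi
    by (rule opfv_model.intro)
      (fact Px_prob pt_meas pt_nonneg pt_supp pt_prob pi0_nonneg pi0_sum pie_nonneg pie_sum
        pi0_meas pie_meas R_prob R_sets R_range R_meas fhat_meas fhat_bdd phi_meas p_phi_pos
        common_support)+
  show ?thesis
    unfolding stationary target_ctx by (rule bias_opfv[OF n_pos])
qed

end
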